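(* Fix a point and suppose the Jacobian $J\in\mathbb{R}^{D\times q}$ satisfies $J\sim\mathcal{N}(\mathbb{E}[J],I_D\otimes\Sigma)$ with $\Sigma$ symmetric positive definite; let $G=J^{\top}J$. Then for every $v\in\mathbb{R}^q\setminus\{0\}$, \[0\;\le\;\frac{\|v\|_R-\|v\|_F}{\|v\|_R}\;\le\;\frac{1}{D+\omega}+\frac{\omega}{(D+\omega)^2},\qquad \omega=\frac{v^{\top}\mathbb{E}[J]^{\top}\mathbb{E}[J]v}{v^{\top}\Sigma v}.\]
   Context: $J\sim\mathcal{N}(\mathbb{E}[J],I_D\otimes\Sigma)$: rows of $J$ independent, $k$-th row Gaussian with mean the $k$-th row of $\mathbb{E}[J]$ and covariance $\Sigma\in\mathbb{R}^{q\times q}$. $\|v\|_F=\mathbb{E}[\sqrt{v^{\top}Gv}]$, $\|v\|_R=\sqrt{v^{\top}\mathbb{E}[G]v}$. *)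

theory Defs
  imports "HOL-Probability.Probability"
begin

definition mvn_density :: "real^'q \<Rightarrow> real^'q^'q \<Rightarrow> real^'q \<Rightarrow> real" where
  "mvn_density m S x =
     exp (- (1/2) * ((x - m) \<bullet> (matrix_inv S *v (x - m)))) / sqrt ((2 * pi) ^ CARD('q) * det S)"

definition sym_pos_def_mat :: "real^'q^'q \<Rightarrow> bool" where
  "sym_pos_def_mat S \<longleftrightarrow> transpose S = S \<and> (\<forall>x. x \<noteq> 0 \<longrightarrow> x \<bullet> (S *v x) > 0)"

definition gram :: "real^'q^'d \<Rightarrow> real^'q^'q" where
  "gram A = transpose A ** A"

definition normF :: "'w measure \<Rightarrow> ('w \<Rightarrow> real^'q^'d) \<Rightarrow> real^'q \<Rightarrow> real" where
  "normF M J v = (\<integral>\<omega>. sqrt (v \<bullet> (gram (J \<omega>) *v v)) \<partial>M)"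

definition normR :: "'w measure \<Rightarrow> ('w \<Rightarrow> real^'q^'d) \<Rightarrow> real^'q \<Rightarrow> real" where
  "normR M J v = sqrt (v \<bullet> ((\<chi> i j. (\<integral>\<omega>. gram (J \<omega>) $ i $ j \<partial>M)) *v v))"

end

theory Submission
  imports Defs
begin

text \<open>
  The projections \<open>Y\<^sub>k = J\<^sub>k \<bullet> v\<close> of the rows of \<open>J\<close> are independent Gaussians
  \<open>N(\<mu>\<^sub>k, \<sigma>\<^sup>2)\<close> with \<open>\<mu>\<^sub>k = E[J]\<^sub>k \<bullet> v\<close> and \<open>\<sigma>\<^sup>2 = v \<bullet> \<Sigma> v\<close>, so \<open>X = v \<bullet> G v = \<Sum>\<^sub>k Y\<^sub>k\<^sup>2\<close>
  has mean \<open>a = \<sigma>\<^sup>2 (D + \<omega>)\<close> and variance \<open>2 \<sigma>\<^sup>4 (D + 2 \<omega>)\<close>; the Gaussian moments are read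
  off from the moment generating function. Since \<open>\<parallel>v\<parallel>\<^sub>R = \<surd>a\<close> and \<open>\<parallel>v\<parallel>\<^sub>F = E \<surd>X\<close>, it remains
  to compare \<open>E \<surd>X\<close> with \<open>\<surd>(E X)\<close>: on \<open>[0, \<infinity>)\<close> the square root lies below its tangent at
  \<open>a\<close> and above that tangent minus \<open>(x - a)\<^sup>2 / (2 a \<surd>a)\<close>. Taking expectations gives
  \<open>0 \<le> \<surd>a - E \<surd>X \<le> Var X / (2 a \<surd>a)\<close>, and \<open>Var X / (2 a\<^sup>2)\<close> is exactly the claimed bound.
\<close>

lemma abs_exp_minus_one_le: "\<bar>exp x - 1\<bar> \<le> \<bar>x\<bar> * exp \<bar>x\<bar>" for x :: real
proof (cases "x \<ge> 0")
  case True
  have "1 - x \<le> exp (-x)" using exp_ge_add_one_self[of "-x"] by simp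
  hence "(1 - x) * exp x \<le> exp (-x) * exp x" by (simp add: mult_right_mono)
  hence "exp x - x * exp x \<le> 1" by (simp add: algebra_simps exp_minus_inverse)
  with True show ?thesis by simp
next
  case False
  have "1 + x \<le> exp x" "exp x \<le> 1" using False by auto
  hence "\<bar>exp x - 1\<bar> \<le> \<bar>x\<bar>" by linarith
  also have "\<dots> \<le> \<bar>x\<bar> * exp \<bar>x\<bar>" by (simp add: mult_le_cancel_left1)
  finally show ?thesis .
qed

lemma abs_exp_diff_quotient_le:
  fixes h y B :: real
  assumes "h \<noteq> 0" "\<bar>h\<bar> \<le> B"
  shows "\<bar>(exp (h * y) - 1) / h\<bar> \<le> \<bar>y\<bar> * exp (B * \<bar>y\<bar>)"
proof -
  have "\<bar>exp (h * y) - 1\<bar> \<le> \<bar>h * y\<bar> * exp \<bar>h * y\<bar>" by (rule abs_exp_minus_one_le)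
  also have "\<dots> \<le> \<bar>h\<bar> * (\<bar>y\<bar> * exp (B * \<bar>y\<bar>))"
  proof -
    have "exp (\<bar>h\<bar> * \<bar>y\<bar>) \<le> exp (B * \<bar>y\<bar>)" using assms(2) by (simp add: mult_right_mono)
    thus ?thesis by (simp add: abs_mult mult_left_mono mult.assoc)
  qed
  finally show ?thesis using assms(1) by (simp add: divide_le_eq mult.commute abs_divide)
qed

lemma tendsto_exp_diff_quotient:
  fixes X :: "nat \<Rightarrow> real"
  assumes "\<And>i. X i \<noteq> 0" "X \<longlonglongrightarrow> 0"
  shows "(\<lambda>i. (exp (X i * y) - 1) / X i) \<longlonglongrightarrow> y"
proof -
  have "((\<lambda>h. exp (h * y)) has_real_derivative exp (0 * y) * y) (at 0)"
    by (auto intro!: derivative_eq_intros)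
  hence "((\<lambda>h. (exp (h * y) - 1) / h) \<longlongrightarrow> y) (at 0)"
    unfolding DERIV_def by simp
  thus ?thesis unfolding tendsto_at_iff_sequentially comp_def using assms by auto
qed

lemma abs_power_le_fact_exp: "\<bar>y\<bar> ^ n \<le> fact n * exp \<bar>y\<bar>" for y :: real
proof -
  have s: "(\<lambda>n. \<bar>y\<bar> ^ n /\<^sub>R fact n) sums exp \<bar>y\<bar>" by (rule exp_converges)
  have "(\<Sum>i\<in>{n}. \<bar>y\<bar> ^ i /\<^sub>R fact i) \<le> (\<Sum>n. \<bar>y\<bar> ^ n /\<^sub>R fact n)"
    by (rule sum_le_suminf) (use s in \<open>auto simp: sums_iff\<close>)
  hence "\<bar>y\<bar> ^ n / fact n \<le> exp \<bar>y\<bar>" using s by (simp add: sums_iff divide_inverse_commute)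
  thus ?thesis by (simp add: divide_le_eq mult.commute)
qed

lemma exp_mult_abs_le: "exp (a * \<bar>y\<bar>) \<le> exp (a * y) + exp (- a * y)" for a y :: real
  by (cases "y \<ge> 0") (auto simp: add_increasing add_increasing2)

lemma sqrt_le_tangent:
  fixes a x :: real
  assumes "a > 0" "x \<ge> 0"
  shows "sqrt x \<le> sqrt a + (x - a) / (2 * sqrt a)"
proof -
  define s t where "s = sqrt x" and "t = sqrt a"
  have "t > 0" using assms unfolding t_def by simp
  have "2 * t * s \<le> 2 * t * t + (s\<^sup>2 - t\<^sup>2)"
    using zero_le_power2[of "s - t"] by (simp add: power2_eq_square algebra_simps)
  hence "s \<le> t + (s\<^sup>2 - t\<^sup>2) / (2 * t)" using \<open>t > 0\<close> by (simp add: field_simps)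
  thus ?thesis using assms unfolding s_def t_def by simp
qed

lemma sqrt_ge_tangent_minus_square:
  fixes a x :: real
  assumes "a > 0" "x \<ge> 0"
  shows "sqrt a + (x - a) / (2 * sqrt a) - (x - a)\<^sup>2 / (2 * a * sqrt a) \<le> sqrt x"
proof -
  define s t where "s = sqrt x" and "t = sqrt a"
  have "t > 0" "s \<ge> 0" using assms unfolding s_def t_def by simp_all
  have "2 * t ^ 3 * s - (2 * t ^ 4 + t\<^sup>2 * (s\<^sup>2 - t\<^sup>2) - (s\<^sup>2 - t\<^sup>2)\<^sup>2) = (s - t)\<^sup>2 * (s * (s + 2 * t))"
    by (simp add: power2_eq_square power3_eq_cube power4_eq_xxxx algebra_simps)
  also have "\<dots> \<ge> 0" using \<open>t > 0\<close> \<open>s \<ge> 0\<close> by simp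
  finally have "(2 * t ^ 4 + t\<^sup>2 * (s\<^sup>2 - t\<^sup>2) - (s\<^sup>2 - t\<^sup>2)\<^sup>2) / (2 * t ^ 3) \<le> s"
    using \<open>t > 0\<close> by (simp add: pos_divide_le_eq mult.commute)
  moreover have "t + (s\<^sup>2 - t\<^sup>2) / (2 * t) - (s\<^sup>2 - t\<^sup>2)\<^sup>2 / (2 * t\<^sup>2 * t)
      = (2 * t ^ 4 + t\<^sup>2 * (s\<^sup>2 - t\<^sup>2) - (s\<^sup>2 - t\<^sup>2)\<^sup>2) / (2 * t ^ 3)"
    using \<open>t > 0\<close> by (simp add: field_simps power2_eq_square power3_eq_cube power4_eq_xxxx)
  ultimately show ?thesis using assms unfolding s_def t_def by simp
qed

lemma sym_pos_def_mat_matrix_inv: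
  fixes S :: "real^'q^'q"
  assumes "sym_pos_def_mat S"
  shows "S ** matrix_inv S = mat 1" and "matrix_inv S ** S = mat 1"
proof -
  have "inj ((*v) S)"
  proof (rule injI)
    fix x y
    assume "S *v x = S *v y"
    hence "(x - y) \<bullet> (S *v (x - y)) = 0" by (simp add: matrix_vector_mult_diff_distrib)
    thus "x = y" using assms unfolding sym_pos_def_mat_def by (metis less_irrefl right_minus_eq)
  qed
  hence "invertible S" using invertible_left_inverse matrix_left_invertible_injective by blast
  hence "S ** matrix_inv S = mat 1 \<and> matrix_inv S ** S = mat 1"
    unfolding invertible_def matrix_inv_def by (rule someI_ex)
  thus "S ** matrix_inv S = mat 1" "matrix_inv S ** S = mat 1" by auto
qed

lemma mvn_density_mult_exp:
  fixes S :: "real^'q^'q"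
  assumes S: "sym_pos_def_mat S"
  shows "mvn_density m S x * exp (u \<bullet> x)
       = mvn_density (m + S *v u) S x * exp (u \<bullet> m + u \<bullet> (S *v u) / 2)"
proof -
  define P w y where "P = matrix_inv S" and "w = S *v u" and "y = x - m"
  have SP: "S ** P = mat 1" "P ** S = mat 1"
    using sym_pos_def_mat_matrix_inv[OF S] unfolding P_def by auto
  have "w = u v* S" unfolding w_def
    using S by (metis sym_pos_def_mat_def transpose_matrix_vector)
  hence w_P: "w \<bullet> (P *v z) = u \<bullet> z" for z
    by (simp add: dot_lmul_matrix matrix_vector_mul_assoc SP)
  have P_w: "z \<bullet> (P *v w) = z \<bullet> u" for z
    unfolding w_def by (simp add: matrix_vector_mul_assoc SP)
  have quadratic: "(y - w) \<bullet> (P *v (y - w)) = y \<bullet> (P *v y) - 2 * (u \<bullet> y) + u \<bullet> w"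
    by (simp add: matrix_vector_mult_diff_distrib inner_diff_left inner_diff_right w_P P_w inner_commute)
  have x_shift: "x - (m + w) = y - w" unfolding y_def by simp
  have "u \<bullet> x = u \<bullet> y + u \<bullet> m" unfolding y_def by (simp add: inner_diff_right)
  hence "u \<bullet> x - y \<bullet> (P *v y) / 2
      = u \<bullet> m + u \<bullet> w / 2 - (x - (m + w)) \<bullet> (P *v (x - (m + w))) / 2"
    unfolding x_shift quadratic by (simp add: field_simps)
  thus ?thesis
    unfolding mvn_density_def P_def[symmetric] w_def[symmetric] y_def[symmetric]
    by (simp add: mult.commute exp_add[symmetric])
qed

lemma mvn_density_shift: "mvn_density (m + t) S x = mvn_density m S (x - t)"
  unfolding mvn_density_def by (simp add: algebra_simps)

lemma inner_gram_mult:
  fixes A :: "real^'q^'d"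
  shows "v \<bullet> (gram A *v v) = (\<Sum>k\<in>UNIV. (A $ k \<bullet> v)\<^sup>2)"
proof -
  have "v \<bullet> (gram A *v v) = (A *v v) \<bullet> (A *v v)"
    unfolding gram_def
    by (metis dot_lmul_matrix inner_commute matrix_vector_mul_assoc transpose_matrix_vector)
  also have "\<dots> = (\<Sum>k\<in>UNIV. (A $ k \<bullet> v)\<^sup>2)"
    by (simp add: inner_vec_def matrix_vector_mult_def power2_eq_square)
  finally show ?thesis .
qed

lemma gram_nth: "gram A $ i $ j = (\<Sum>k\<in>UNIV. A $ k $ i * A $ k $ j)"
  by (simp add: gram_def matrix_matrix_mult_def transpose_def)

lemma inner_matrix_vector_mult_eq_sum:
  fixes B :: "real^'q^'q"
  shows "v \<bullet> (B *v v) = (\<Sum>i\<in>UNIV. \<Sum>j\<in>UNIV. v $ i * v $ j * B $ i $ j)"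
  by (simp add: inner_vec_def matrix_vector_mult_def sum_distrib_left algebra_simps)

context prob_space
begin

lemma integrable_abs_power_exp_mult:
  fixes Y :: "'a \<Rightarrow> real"
  assumes Y[measurable]: "Y \<in> borel_measurable M"
    and exp_moments: "\<And>s. integrable M (\<lambda>\<omega>. exp (s * Y \<omega>))"
  shows "integrable M (\<lambda>\<omega>. \<bar>Y \<omega>\<bar> ^ n * exp (c * \<bar>Y \<omega>\<bar>) * exp (s * Y \<omega>))"
proof (rule Bochner_Integration.integrable_bound)
  show "integrable M (\<lambda>\<omega>. fact n * (exp ((s + (c + 1)) * Y \<omega>) + exp ((s - (c + 1)) * Y \<omega>)))"
    using exp_moments by (intro integrable_mult_right integrable_add) auto
  show "(\<lambda>\<omega>. \<bar>Y \<omega>\<bar> ^ n * exp (c * \<bar>Y \<omega>\<bar>) * exp (s * Y \<omega>)) \<in> borel_measurable M"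
    by measurable
  show "AE \<omega> in M. norm (\<bar>Y \<omega>\<bar> ^ n * exp (c * \<bar>Y \<omega>\<bar>) * exp (s * Y \<omega>))
      \<le> norm (fact n * (exp ((s + (c + 1)) * Y \<omega>) + exp ((s - (c + 1)) * Y \<omega>)))"
  proof (intro AE_I2)
    fix \<omega>
    let ?y = "Y \<omega>"
    have "\<bar>?y\<bar> ^ n * exp (c * \<bar>?y\<bar>) * exp (s * ?y)
        \<le> fact n * exp \<bar>?y\<bar> * exp (c * \<bar>?y\<bar>) * exp (s * ?y)"
      by (intro mult_right_mono abs_power_le_fact_exp) auto
    also have "\<dots> = fact n * (exp ((c + 1) * \<bar>?y\<bar>) * exp (s * ?y))"
      by (simp add: algebra_simps exp_add[symmetric])
    also have "\<dots> \<le> fact n * ((exp ((c + 1) * ?y) + exp (- (c + 1) * ?y)) * exp (s * ?y))"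
      by (intro mult_left_mono mult_right_mono exp_mult_abs_le) auto
    also have "\<dots> = fact n * (exp ((s + (c + 1)) * ?y) + exp ((s - (c + 1)) * ?y))"
      by (simp add: algebra_simps exp_add[symmetric])
    finally show "norm (\<bar>?y\<bar> ^ n * exp (c * \<bar>?y\<bar>) * exp (s * ?y))
        \<le> norm (fact n * (exp ((s + (c + 1)) * ?y) + exp ((s - (c + 1)) * ?y)))"
      by (simp add: abs_mult)
  qed
qed

lemma integrable_power_exp_mult:
  fixes Y :: "'a \<Rightarrow> real"
  assumes Y[measurable]: "Y \<in> borel_measurable M"
    and exp_moments: "\<And>s. integrable M (\<lambda>\<omega>. exp (s * Y \<omega>))"
  shows "integrable M (\<lambda>\<omega>. Y \<omega> ^ n * exp (s * Y \<omega>))"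
proof (rule Bochner_Integration.integrable_bound)
  show "integrable M (\<lambda>\<omega>. \<bar>Y \<omega>\<bar> ^ n * exp (0 * \<bar>Y \<omega>\<bar>) * exp (s * Y \<omega>))"
    by (rule integrable_abs_power_exp_mult[OF Y exp_moments])
qed (auto simp: abs_mult power_abs)

lemma has_real_derivative_integral_power_exp_mult:
  fixes Y :: "'a \<Rightarrow> real"
  assumes Y[measurable]: "Y \<in> borel_measurable M"
    and exp_moments: "\<And>s. integrable M (\<lambda>\<omega>. exp (s * Y \<omega>))"
  shows "((\<lambda>s. \<integral>\<omega>. Y \<omega> ^ n * exp (s * Y \<omega>) \<partial>M) has_real_derivative
          (\<integral>\<omega>. Y \<omega> ^ Suc n * exp (s * Y \<omega>) \<partial>M)) (at s)"
proof -
  define \<psi> where "\<psi> s = (\<integral>\<omega>. Y \<omega> ^ n * exp (s * Y \<omega>) \<partial>M)" for s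
  define q where "q h y = Y y ^ n * exp (s * Y y) * ((exp (h * Y y) - 1) / h)" for h y
  have q_int: "(\<psi> (s + h) - \<psi> s) / h = (\<integral>\<omega>. q h \<omega> \<partial>M)" for h
  proof -
    have "(\<psi> (s + h) - \<psi> s) / h
        = (\<integral>\<omega>. Y \<omega> ^ n * exp ((s + h) * Y \<omega>) - Y \<omega> ^ n * exp (s * Y \<omega>) \<partial>M) / h"
      unfolding \<psi>_def
      using integrable_power_exp_mult[OF Y exp_moments] by (simp add: Bochner_Integration.integral_diff)
    also have "\<dots> = (\<integral>\<omega>. (Y \<omega> ^ n * exp ((s + h) * Y \<omega>) - Y \<omega> ^ n * exp (s * Y \<omega>)) / h \<partial>M)"
      by (rule integral_divide_zero[symmetric])
    also have "\<dots> = (\<integral>\<omega>. q h \<omega> \<partial>M)"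
      unfolding q_def by (simp add: algebra_simps exp_add diff_divide_distrib)
    finally show ?thesis .
  qed
  have "((\<lambda>h. (\<psi> (s + h) - \<psi> s) / h) \<longlongrightarrow> (\<integral>\<omega>. Y \<omega> ^ Suc n * exp (s * Y \<omega>) \<partial>M)) (at 0)"
    unfolding tendsto_at_iff_sequentially comp_def q_int
  proof (intro allI impI)
    fix X :: "nat \<Rightarrow> real"
    assume "\<forall>i. X i \<in> UNIV - {0}" and X_lim: "X \<longlonglongrightarrow> 0"
    hence X_nz: "\<And>i. X i \<noteq> 0" by auto
    obtain B where X_bound: "\<And>i. norm (X i) \<le> B"
      using convergent_imp_Bseq[of X] X_lim unfolding Bseq_def convergent_def by blast
    show "(\<lambda>i. \<integral>\<omega>. q (X i) \<omega> \<partial>M) \<longlonglongrightarrow> (\<integral>\<omega>. Y \<omega> ^ Suc n * exp (s * Y \<omega>) \<partial>M)"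
    proof (rule integral_dominated_convergence)
      show "integrable M (\<lambda>\<omega>. \<bar>Y \<omega>\<bar> ^ Suc n * exp (B * \<bar>Y \<omega>\<bar>) * exp (s * Y \<omega>))"
        by (rule integrable_abs_power_exp_mult[OF Y exp_moments])
      show "AE \<omega> in M. (\<lambda>i. q (X i) \<omega>) \<longlonglongrightarrow> Y \<omega> ^ Suc n * exp (s * Y \<omega>)"
      proof (intro AE_I2)
        fix \<omega>
        have "(\<lambda>i. q (X i) \<omega>) \<longlonglongrightarrow> Y \<omega> ^ n * exp (s * Y \<omega>) * Y \<omega>"
          unfolding q_def by (intro tendsto_mult_left tendsto_exp_diff_quotient X_nz X_lim)
        thus "(\<lambda>i. q (X i) \<omega>) \<longlonglongrightarrow> Y \<omega> ^ Suc n * exp (s * Y \<omega>)"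
          by (simp add: algebra_simps)
      qed
      show "AE \<omega> in M. norm (q (X i) \<omega>) \<le> \<bar>Y \<omega>\<bar> ^ Suc n * exp (B * \<bar>Y \<omega>\<bar>) * exp (s * Y \<omega>)"
        for i
      proof (intro AE_I2)
        fix \<omega>
        have "norm (q (X i) \<omega>) = \<bar>Y \<omega>\<bar> ^ n * exp (s * Y \<omega>) * \<bar>(exp (X i * Y \<omega>) - 1) / X i\<bar>"
          unfolding q_def by (simp add: abs_mult power_abs)
        also have "\<dots> \<le> \<bar>Y \<omega>\<bar> ^ n * exp (s * Y \<omega>) * (\<bar>Y \<omega>\<bar> * exp (B * \<bar>Y \<omega>\<bar>))"
          using X_nz X_bound by (intro mult_left_mono abs_exp_diff_quotient_le) auto
        finally show "norm (q (X i) \<omega>) \<le> \<bar>Y \<omega>\<bar> ^ Suc n * exp (B * \<bar>Y \<omega>\<bar>) * exp (s * Y \<omega>)"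
          by (simp add: algebra_simps)
      qed
    qed (auto simp: q_def)
  qed
  thus ?thesis unfolding DERIV_def \<psi>_def .
qed

text \<open>
  The \<open>n\<close>-th moment is the \<open>n\<close>-th derivative at \<open>0\<close> of the moment generating function.
\<close>

lemma gaussian_mgf_moments:
  fixes Y :: "'a \<Rightarrow> real"
  assumes Y[measurable]: "Y \<in> borel_measurable M"
    and exp_moments: "\<And>s. integrable M (\<lambda>\<omega>. exp (s * Y \<omega>))"
    and mgf: "\<And>s. (\<integral>\<omega>. exp (s * Y \<omega>) \<partial>M) = exp (s * \<mu> + s\<^sup>2 * \<sigma>2 / 2)"
  shows "integrable M (\<lambda>\<omega>. Y \<omega> ^ n)"
    and "(\<integral>\<omega>. Y \<omega> ^ 2 \<partial>M) = \<mu>\<^sup>2 + \<sigma>2"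
    and "(\<integral>\<omega>. Y \<omega> ^ 4 \<partial>M) = \<mu> ^ 4 + 6 * \<mu>\<^sup>2 * \<sigma>2 + 3 * \<sigma>2\<^sup>2"
proof -
  define \<psi> where "\<psi> n s = (\<integral>\<omega>. Y \<omega> ^ n * exp (s * Y \<omega>) \<partial>M)" for n s
  have next_moment: "\<psi> (Suc n) = g'"
    if "\<psi> n = g" "\<And>s. (g has_real_derivative g' s) (at s)" for n g g'
  proof
    fix s
    have "(\<psi> n has_real_derivative \<psi> (Suc n) s) (at s)"
      unfolding \<psi>_def by (rule has_real_derivative_integral_power_exp_mult[OF Y exp_moments])
    with that show "\<psi> (Suc n) s = g' s" using DERIV_unique by blast
  qed
  define e where "e s = exp (s * \<mu> + s\<^sup>2 * \<sigma>2 / 2)" for s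
  have de: "(e has_real_derivative (\<mu> + s * \<sigma>2) * e s) (at s)" for s
    unfolding e_def by (auto intro!: derivative_eq_intros simp: power2_eq_square algebra_simps)
  have p0: "\<psi> 0 = e" unfolding \<psi>_def e_def by (simp add: mgf)
  have p1: "\<psi> 1 = (\<lambda>s. (\<mu> + s * \<sigma>2) * e s)"
    using next_moment[OF p0 de] by (simp only: One_nat_def)
  have p2: "\<psi> 2 = (\<lambda>s. (\<sigma>2 + (\<mu> + s * \<sigma>2)\<^sup>2) * e s)"
  proof -
    have "((\<lambda>s. (\<mu> + s * \<sigma>2) * e s) has_real_derivative (\<sigma>2 + (\<mu> + s * \<sigma>2)\<^sup>2) * e s) (at s)"
      for s by (auto intro!: derivative_eq_intros de simp: power2_eq_square algebra_simps)
    from next_moment[OF p1 this] show ?thesis by (simp only: numeral_2_eq_2 One_nat_def)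
  qed
  have p3: "\<psi> 3 = (\<lambda>s. (3 * \<sigma>2 * (\<mu> + s * \<sigma>2) + (\<mu> + s * \<sigma>2) ^ 3) * e s)"
  proof -
    have "((\<lambda>s. (\<sigma>2 + (\<mu> + s * \<sigma>2)\<^sup>2) * e s) has_real_derivative
        (3 * \<sigma>2 * (\<mu> + s * \<sigma>2) + (\<mu> + s * \<sigma>2) ^ 3) * e s) (at s)" for s
      by (auto intro!: derivative_eq_intros de simp: power2_eq_square power3_eq_cube algebra_simps)
    from next_moment[OF p2 this] show ?thesis by simp
  qed
  have p4: "\<psi> 4 = (\<lambda>s. (3 * \<sigma>2\<^sup>2 + 6 * \<sigma>2 * (\<mu> + s * \<sigma>2)\<^sup>2 + (\<mu> + s * \<sigma>2) ^ 4) * e s)"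
  proof -
    have "((\<lambda>s. (3 * \<sigma>2 * (\<mu> + s * \<sigma>2) + (\<mu> + s * \<sigma>2) ^ 3) * e s) has_real_derivative
        (3 * \<sigma>2\<^sup>2 + 6 * \<sigma>2 * (\<mu> + s * \<sigma>2)\<^sup>2 + (\<mu> + s * \<sigma>2) ^ 4) * e s) (at s)" for s
      by (auto intro!: derivative_eq_intros de
          simp: power2_eq_square power3_eq_cube power4_eq_xxxx algebra_simps)
    from next_moment[OF p3 this] show ?thesis by simp
  qed
  show "integrable M (\<lambda>\<omega>. Y \<omega> ^ n)"
    using integrable_power_exp_mult[OF Y exp_moments, of n 0] by simp
  show "(\<integral>\<omega>. Y \<omega> ^ 2 \<partial>M) = \<mu>\<^sup>2 + \<sigma>2"
    using fun_cong[OF p2, of 0] by (simp add: \<psi>_def e_def)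
  show "(\<integral>\<omega>. Y \<omega> ^ 4 \<partial>M) = \<mu> ^ 4 + 6 * \<mu>\<^sup>2 * \<sigma>2 + 3 * \<sigma>2\<^sup>2"
    using fun_cong[OF p4, of 0] by (simp add: \<psi>_def e_def algebra_simps)
qed

lemma mvn_mgf:
  fixes X :: "'a \<Rightarrow> real^'q" and S :: "real^'q^'q"
  assumes S: "sym_pos_def_mat S"
    and X_distr: "distributed M lborel X (\<lambda>x. ennreal (mvn_density m S x))"
  shows "integrable M (\<lambda>\<omega>. exp (u \<bullet> X \<omega>))"
    and "(\<integral>\<omega>. exp (u \<bullet> X \<omega>) \<partial>M) = exp (u \<bullet> m + u \<bullet> (S *v u) / 2)"
proof -
  have [measurable]: "X \<in> borel_measurable M" "(\<lambda>x. ennreal (mvn_density m S x)) \<in> borel_measurable borel"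
    using distributed_measurable[OF X_distr] distributed_borel_measurable[OF X_distr] by simp_all
  have total: "(\<integral>\<^sup>+ x. ennreal (mvn_density m S x) \<partial>lborel) = 1"
    using distributed_nn_integral[OF X_distr, of "\<lambda>_. 1"] by (simp add: emeasure_space_1)
  have shifted_total: "(\<integral>\<^sup>+ x. ennreal (mvn_density (m + t) S x) \<partial>lborel) = 1" for t
  proof -
    have "(\<integral>\<^sup>+ x. ennreal (mvn_density (m + t) S x) \<partial>lborel)
        = (\<integral>\<^sup>+ x. ennreal (mvn_density m S x) \<partial>distr lborel borel ((+) (-t)))"
      by (subst nn_integral_distr) (auto simp: mvn_density_shift)
    also have "\<dots> = 1" using total by (simp add: lborel_distr_plus)
    finally show ?thesis .
  qed
  define c where "c = u \<bullet> m + u \<bullet> (S *v u) / 2"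
  have [measurable]: "(\<lambda>x. ennreal (mvn_density (m + S *v u) S x)) \<in> borel_measurable borel"
    unfolding mvn_density_shift by measurable
  have "(\<integral>\<^sup>+ \<omega>. ennreal (exp (u \<bullet> X \<omega>)) \<partial>M)
      = (\<integral>\<^sup>+ x. ennreal (mvn_density m S x) * ennreal (exp (u \<bullet> x)) \<partial>lborel)"
    by (rule distributed_nn_integral[OF X_distr, symmetric]) auto
  also have "\<dots> = (\<integral>\<^sup>+ x. ennreal (mvn_density (m + S *v u) S x) * ennreal (exp c) \<partial>lborel)"
    by (intro nn_integral_cong) (simp add: ennreal_mult''[symmetric] mvn_density_mult_exp[OF S] c_def)
  also have "\<dots> = ennreal (exp c)"
    by (subst nn_integral_multc) (auto simp: shifted_total)
  finally have nn: "(\<integral>\<^sup>+ \<omega>. ennreal (exp (u \<bullet> X \<omega>)) \<partial>M) = ennreal (exp c)" .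
  show "integrable M (\<lambda>\<omega>. exp (u \<bullet> X \<omega>))"
    by (rule integrableI_nn_integral_finite[OF _ _ nn]) auto
  show "(\<integral>\<omega>. exp (u \<bullet> X \<omega>) \<partial>M) = exp (u \<bullet> m + u \<bullet> (S *v u) / 2)"
    by (subst integral_eq_nn_integral) (auto simp: nn c_def)
qed

lemma mvn_inner_moments:
  fixes X :: "'a \<Rightarrow> real^'q" and S :: "real^'q^'q"
  assumes S: "sym_pos_def_mat S"
    and X_distr: "distributed M lborel X (\<lambda>x. ennreal (mvn_density m S x))"
  shows "integrable M (\<lambda>\<omega>. (X \<omega> \<bullet> u) ^ n)"
    and "(\<integral>\<omega>. (X \<omega> \<bullet> u)\<^sup>2 \<partial>M) = (m \<bullet> u)\<^sup>2 + u \<bullet> (S *v u)"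
    and "(\<integral>\<omega>. (X \<omega> \<bullet> u) ^ 4 \<partial>M) = (m \<bullet> u) ^ 4 + 6 * (m \<bullet> u)\<^sup>2 * (u \<bullet> (S *v u)) + 3 * (u \<bullet> (S *v u))\<^sup>2"
proof -
  have [measurable]: "X \<in> borel_measurable M" using distributed_measurable[OF X_distr] by simp
  have scaled: "s * (X \<omega> \<bullet> u) = (s *\<^sub>R u) \<bullet> X \<omega>" for s \<omega> by (simp add: inner_commute)
  have "S *v (s *\<^sub>R u) = s *\<^sub>R (S *v u)" for s
    by (simp add: vec_eq_iff matrix_vector_mult_def sum_distrib_left algebra_simps)
  hence "(\<integral>\<omega>. exp (s * (X \<omega> \<bullet> u)) \<partial>M) = exp (s * (m \<bullet> u) + s\<^sup>2 * (u \<bullet> (S *v u)) / 2)" for s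
    unfolding scaled mvn_mgf(2)[OF S X_distr] by (simp add: inner_commute power2_eq_square algebra_simps)
  moreover have "integrable M (\<lambda>\<omega>. exp (s * (X \<omega> \<bullet> u)))" for s
    unfolding scaled by (rule mvn_mgf(1)[OF S X_distr])
  ultimately show "integrable M (\<lambda>\<omega>. (X \<omega> \<bullet> u) ^ n)"
    and "(\<integral>\<omega>. (X \<omega> \<bullet> u)\<^sup>2 \<partial>M) = (m \<bullet> u)\<^sup>2 + u \<bullet> (S *v u)"
    and "(\<integral>\<omega>. (X \<omega> \<bullet> u) ^ 4 \<partial>M) = (m \<bullet> u) ^ 4 + 6 * (m \<bullet> u)\<^sup>2 * (u \<bullet> (S *v u)) + 3 * (u \<bullet> (S *v u))\<^sup>2"
    by (auto intro: gaussian_mgf_moments[of "\<lambda>\<omega>. X \<omega> \<bullet> u"])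
qed

lemma mvn_variance_inner_square:
  fixes X :: "'a \<Rightarrow> real^'q" and S :: "real^'q^'q"
  assumes S: "sym_pos_def_mat S"
    and X_distr: "distributed M lborel X (\<lambda>x. ennreal (mvn_density m S x))"
  shows "variance (\<lambda>\<omega>. (X \<omega> \<bullet> u)\<^sup>2) = 4 * (m \<bullet> u)\<^sup>2 * (u \<bullet> (S *v u)) + 2 * (u \<bullet> (S *v u))\<^sup>2"
proof -
  note moments = mvn_inner_moments[OF S X_distr, of u]
  have fourth: "(\<lambda>\<omega>. ((X \<omega> \<bullet> u)\<^sup>2)\<^sup>2) = (\<lambda>\<omega>. (X \<omega> \<bullet> u) ^ 4)" by simp
  have "variance (\<lambda>\<omega>. (X \<omega> \<bullet> u)\<^sup>2) = (\<integral>\<omega>. (X \<omega> \<bullet> u) ^ 4 \<partial>M) - (\<integral>\<omega>. (X \<omega> \<bullet> u)\<^sup>2 \<partial>M)\<^sup>2"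
    using moments(1) unfolding fourth[symmetric] by (intro variance_eq) auto
  thus ?thesis unfolding moments(2,3) by (simp add: power2_eq_square power4_eq_xxxx algebra_simps)
qed

lemma variance_sum_indep:
  fixes Z :: "'i \<Rightarrow> 'a \<Rightarrow> real"
  assumes "finite I" and indep: "indep_vars (\<lambda>_. borel) Z I"
    and int: "\<And>i. i \<in> I \<Longrightarrow> integrable M (Z i)"
    and int_sq: "\<And>i. i \<in> I \<Longrightarrow> integrable M (\<lambda>\<omega>. (Z i \<omega>)\<^sup>2)"
  shows "integrable M (\<lambda>\<omega>. (\<Sum>i\<in>I. Z i \<omega>)\<^sup>2)"
    and "variance (\<lambda>\<omega>. \<Sum>i\<in>I. Z i \<omega>) = (\<Sum>i\<in>I. variance (Z i))"
proof -
  have pair: "integrable M (\<lambda>\<omega>. Z i \<omega> * Z j \<omega>) \<and>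
      (\<integral>\<omega>. Z i \<omega> * Z j \<omega> \<partial>M) = (if i = j then \<integral>\<omega>. (Z i \<omega>)\<^sup>2 \<partial>M else expectation (Z i) * expectation (Z j))"
    if "i \<in> I" "j \<in> I" for i j
  proof (cases "i = j")
    case False
    have I2: "indep_vars (\<lambda>_. borel) Z {i, j}"
      using indep_vars_subset[OF indep] that by simp
    have "integrable M (\<lambda>\<omega>. \<Prod>k\<in>{i, j}. Z k \<omega>)"
      using that int by (intro indep_vars_integrable[OF _ I2]) auto
    moreover have "(\<integral>\<omega>. (\<Prod>k\<in>{i, j}. Z k \<omega>) \<partial>M) = (\<Prod>k\<in>{i, j}. expectation (Z k))"
      using that int by (intro indep_vars_lebesgue_integral[OF _ I2]) auto
    ultimately show ?thesis using False by simp
  qed (use int_sq that in \<open>simp add: power2_eq_square\<close>)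
  have square_sum: "(\<Sum>i\<in>I. Z i \<omega>)\<^sup>2 = (\<Sum>i\<in>I. \<Sum>j\<in>I. Z i \<omega> * Z j \<omega>)" for \<omega>
    by (simp add: power2_eq_square sum_product)
  show int_sum_sq: "integrable M (\<lambda>\<omega>. (\<Sum>i\<in>I. Z i \<omega>)\<^sup>2)"
    unfolding square_sum using pair by (intro Bochner_Integration.integrable_sum) auto
  have "expectation (\<lambda>\<omega>. (\<Sum>i\<in>I. Z i \<omega>)\<^sup>2)
      = (\<Sum>i\<in>I. \<Sum>j\<in>I. if i = j then expectation (\<lambda>\<omega>. (Z i \<omega>)\<^sup>2) else expectation (Z i) * expectation (Z j))"
    unfolding square_sum using pair by (simp add: Bochner_Integration.integral_sum)
  moreover have "(expectation (\<lambda>\<omega>. \<Sum>i\<in>I. Z i \<omega>))\<^sup>2 = (\<Sum>i\<in>I. \<Sum>j\<in>I. expectation (Z i) * expectation (Z j))"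
    using int by (simp add: Bochner_Integration.integral_sum power2_eq_square sum_product)
  ultimately have "variance (\<lambda>\<omega>. \<Sum>i\<in>I. Z i \<omega>)
      = (\<Sum>i\<in>I. \<Sum>j\<in>I. if i = j then expectation (\<lambda>\<omega>. (Z i \<omega>)\<^sup>2) - (expectation (Z i))\<^sup>2 else 0)"
    using int int_sum_sq
    by (subst variance_eq) (auto simp: sum_subtractf[symmetric] power2_eq_square intro!: sum.cong)
  also have "\<dots> = (\<Sum>i\<in>I. variance (Z i))"
    using \<open>finite I\<close> int int_sq by (simp add: variance_eq)
  finally show "variance (\<lambda>\<omega>. \<Sum>i\<in>I. Z i \<omega>) = (\<Sum>i\<in>I. variance (Z i))" .
qed

lemma expectation_sqrt_bounds:
  fixes X :: "'a \<Rightarrow> real"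
  assumes int: "integrable M X" and int_sq: "integrable M (\<lambda>\<omega>. (X \<omega>)\<^sup>2)"
    and nonneg: "\<And>\<omega>. X \<omega> \<ge> 0" and pos: "expectation X > 0"
  shows "0 \<le> sqrt (expectation X) - expectation (\<lambda>\<omega>. sqrt (X \<omega>))"
    and "sqrt (expectation X) - expectation (\<lambda>\<omega>. sqrt (X \<omega>))
      \<le> variance X / (2 * expectation X * sqrt (expectation X))"
proof -
  define a where "a = expectation X"
  have X[measurable]: "X \<in> borel_measurable M" using int by simp
  have int_sqrt: "integrable M (\<lambda>\<omega>. sqrt (X \<omega>))"
  proof (rule Bochner_Integration.integrable_bound)
    show "integrable M (\<lambda>\<omega>. 1 + X \<omega>)" using int by simp
    show "AE \<omega> in M. norm (sqrt (X \<omega>)) \<le> norm (1 + X \<omega>)"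
    proof (intro AE_I2)
      fix \<omega>
      have "sqrt (X \<omega>) \<le> 1 + (X \<omega> - 1) / 2" using sqrt_le_tangent[of 1 "X \<omega>"] nonneg by simp
      thus "norm (sqrt (X \<omega>)) \<le> norm (1 + X \<omega>)" using nonneg[of \<omega>] by (simp add: field_simps)
    qed
  qed simp
  have int_dev_sq: "integrable M (\<lambda>\<omega>. (X \<omega> - a)\<^sup>2)"
    using int int_sq by (simp add: power2_diff)
  have "expectation (\<lambda>\<omega>. sqrt (X \<omega>)) \<le> expectation (\<lambda>\<omega>. sqrt a + (X \<omega> - a) / (2 * sqrt a))"
    using int_sqrt int pos nonneg by (intro integral_mono sqrt_le_tangent) (auto simp: a_def)
  also have "\<dots> = sqrt a"
    using int by (simp add: a_def prob_space)
  finally show "0 \<le> sqrt (expectation X) - expectation (\<lambda>\<omega>. sqrt (X \<omega>))"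
    unfolding a_def by simp
  have "sqrt a - variance X / (2 * a * sqrt a)
      = expectation (\<lambda>\<omega>. sqrt a + (X \<omega> - a) / (2 * sqrt a) - (X \<omega> - a)\<^sup>2 / (2 * a * sqrt a))"
    using int int_dev_sq by (simp add: a_def prob_space)
  also have "\<dots> \<le> expectation (\<lambda>\<omega>. sqrt (X \<omega>))"
    using int int_dev_sq int_sqrt pos nonneg
    by (intro integral_mono sqrt_ge_tangent_minus_square) (auto simp: a_def)
  finally show "sqrt (expectation X) - expectation (\<lambda>\<omega>. sqrt (X \<omega>))
      \<le> variance X / (2 * expectation X * sqrt (expectation X))"
    unfolding a_def by simp
qed

lemma relative_sqrt_expectation_gap:
  fixes X :: "'a \<Rightarrow> real"
  assumes "integrable M X" and "integrable M (\<lambda>\<omega>. (X \<omega>)\<^sup>2)"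
    and "\<And>\<omega>. X \<omega> \<ge> 0" and pos: "expectation X > 0"
  shows "0 \<le> (sqrt (expectation X) - expectation (\<lambda>\<omega>. sqrt (X \<omega>))) / sqrt (expectation X)"
    and "(sqrt (expectation X) - expectation (\<lambda>\<omega>. sqrt (X \<omega>))) / sqrt (expectation X)
      \<le> variance X / (2 * (expectation X)\<^sup>2)"
proof -
  note bounds = expectation_sqrt_bounds[OF assms]
  define a F where "a = expectation X" and "F = expectation (\<lambda>\<omega>. sqrt (X \<omega>))"
  have "sqrt a > 0" using pos unfolding a_def by simp
  show "0 \<le> (sqrt (expectation X) - expectation (\<lambda>\<omega>. sqrt (X \<omega>))) / sqrt (expectation X)"
    using bounds(1) pos by simp
  have "(sqrt a - F) / sqrt a \<le> variance X / (2 * a * sqrt a) / sqrt a"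
    using bounds(2) \<open>sqrt a > 0\<close> unfolding a_def F_def by (intro divide_right_mono) auto
  also have "\<dots> = variance X / (2 * a\<^sup>2)"
    using \<open>sqrt a > 0\<close> by (simp add: power2_eq_square)
  finally show "(sqrt (expectation X) - expectation (\<lambda>\<omega>. sqrt (X \<omega>))) / sqrt (expectation X)
      \<le> variance X / (2 * (expectation X)\<^sup>2)"
    unfolding a_def F_def .
qed

end

lemma normR_eq_sqrt_integral:
  assumes "\<And>i j. integrable M (\<lambda>\<omega>. gram (J \<omega>) $ i $ j)"
  shows "normR M J v = sqrt (\<integral>\<omega>. v \<bullet> (gram (J \<omega>) *v v) \<partial>M)"
proof -
  have "v \<bullet> ((\<chi> i j. \<integral>\<omega>. gram (J \<omega>) $ i $ j \<partial>M) *v v)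
      = (\<Sum>i\<in>UNIV. \<Sum>j\<in>UNIV. v $ i * v $ j * (\<integral>\<omega>. gram (J \<omega>) $ i $ j \<partial>M))"
    by (simp add: inner_matrix_vector_mult_eq_sum)
  also have "\<dots> = (\<integral>\<omega>. v \<bullet> (gram (J \<omega>) *v v) \<partial>M)"
    using assms by (simp add: inner_matrix_vector_mult_eq_sum Bochner_Integration.integral_sum)
  finally show ?thesis unfolding normR_def by simp
qed

locale gaussian_rows = prob_space M for M :: "'w measure" +
  fixes J :: "'w \<Rightarrow> real^'q^'d" and EJ :: "real^'q^'d" and \<Sigma> :: "real^'q^'q"
  assumes sym_pos_def: "sym_pos_def_mat \<Sigma>"
    and indep_rows: "indep_vars (\<lambda>_. borel) (\<lambda>k \<omega>. J \<omega> $ k) UNIV"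
    and row_distributed: "\<And>k. distributed M lborel (\<lambda>\<omega>. J \<omega> $ k) (\<lambda>x. ennreal (mvn_density (EJ $ k) \<Sigma> x))"
begin

lemmas row_moments = mvn_inner_moments[OF sym_pos_def row_distributed]

lemma integrable_gram_nth: "integrable M (\<lambda>\<omega>. gram (J \<omega>) $ i $ j)"
proof -
  have polarization: "J \<omega> $ k $ i * J \<omega> $ k $ j
      = ((J \<omega> $ k \<bullet> (axis i 1 + axis j 1))\<^sup>2 - (J \<omega> $ k \<bullet> (axis i 1 - axis j 1))\<^sup>2) / 4" for \<omega> k
    by (simp add: inner_add_right inner_diff_right inner_axis power2_eq_square algebra_simps)
  show ?thesis unfolding gram_nth polarization
    by (intro Bochner_Integration.integrable_sum integrable_divide_zero
        Bochner_Integration.integrable_diff row_moments(1))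
qed

lemma quadratic_form_moments:
  fixes v :: "real^'q"
  defines "X \<equiv> \<lambda>\<omega>. v \<bullet> (gram (J \<omega>) *v v)"
    and "\<sigma>2 \<equiv> v \<bullet> (\<Sigma> *v v)" and "L \<equiv> v \<bullet> ((transpose EJ ** EJ) *v v)"
  shows "integrable M X" and "integrable M (\<lambda>\<omega>. (X \<omega>)\<^sup>2)"
    and "expectation X = L + real CARD('d) * \<sigma>2"
    and "variance X = 4 * \<sigma>2 * L + 2 * real CARD('d) * \<sigma>2\<^sup>2"
proof -
  have X_sum: "X = (\<lambda>\<omega>. \<Sum>k\<in>UNIV. (J \<omega> $ k \<bullet> v)\<^sup>2)" unfolding X_def inner_gram_mult ..
  have L_sum: "L = (\<Sum>k\<in>UNIV. (EJ $ k \<bullet> v)\<^sup>2)" unfolding L_def inner_gram_mult[unfolded gram_def] ..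
  have indep_squares: "indep_vars (\<lambda>_. borel) (\<lambda>k \<omega>. (J \<omega> $ k \<bullet> v)\<^sup>2) UNIV"
    using indep_vars_compose2[OF indep_rows, of "\<lambda>_ x. (x \<bullet> v)\<^sup>2"] by simp
  have int_square: "integrable M (\<lambda>\<omega>. ((J \<omega> $ k \<bullet> v)\<^sup>2)\<^sup>2)" for k
    using row_moments(1)[of k v 4] by simp
  note variance_sum = variance_sum_indep[OF finite_class.finite_UNIV indep_squares row_moments(1) int_square]
  show "integrable M X" unfolding X_sum by (simp add: row_moments(1))
  show "integrable M (\<lambda>\<omega>. (X \<omega>)\<^sup>2)" unfolding X_sum by (rule variance_sum(1))
  show "expectation X = L + real CARD('d) * \<sigma>2"
    unfolding X_sum L_sum \<sigma>2_def
    by (simp add: Bochner_Integration.integral_sum row_moments sum.distrib)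
  show "variance X = 4 * \<sigma>2 * L + 2 * real CARD('d) * \<sigma>2\<^sup>2"
    unfolding X_sum L_sum \<sigma>2_def variance_sum(2) mvn_variance_inner_square[OF sym_pos_def row_distributed]
    by (simp add: sum.distrib sum_distrib_left algebra_simps)
qed

end

theorem mainTheorem10:
  fixes M :: "'w measure"
    and J :: "'w \<Rightarrow> real^'q^'d"
    and EJ :: "real^'q^'d"
    and \<Sigma> :: "real^'q^'q"
    and v :: "real^'q"
  assumes "prob_space M"
    and "sym_pos_def_mat \<Sigma>"
    and "prob_space.indep_vars M (\<lambda>_. borel) (\<lambda>k \<omega>. J \<omega> $ k) UNIV"
    and "\<And>k. distributed M lborel (\<lambda>\<omega>. J \<omega> $ k) (\<lambda>x. ennreal (mvn_density (EJ $ k) \<Sigma> x))"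
    and "v \<noteq> 0"
  defines "\<omega>' \<equiv> (v \<bullet> ((transpose EJ ** EJ) *v v)) / (v \<bullet> (\<Sigma> *v v))"
    and "D \<equiv> real CARD('d)"
  shows "0 \<le> (normR M J v - normF M J v) / normR M J v
       \<and> (normR M J v - normF M J v) / normR M J v \<le> 1 / (D + \<omega>') + \<omega>' / (D + \<omega>')^2"
proof -
  interpret gaussian_rows M J EJ \<Sigma>
    by (intro gaussian_rows.intro gaussian_rows_axioms.intro) (fact assms)+
  define X where "X \<omega> = v \<bullet> (gram (J \<omega>) *v v)" for \<omega>
  define \<sigma>2 where "\<sigma>2 = v \<bullet> (\<Sigma> *v v)"
  define L where "L = v \<bullet> ((transpose EJ ** EJ) *v v)"
  note moments = quadratic_form_moments[of v, folded X_def \<sigma>2_def L_def]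
  have "\<sigma>2 > 0" using sym_pos_def assms(5) unfolding sym_pos_def_mat_def \<sigma>2_def by auto
  have "L \<ge> 0" unfolding L_def using inner_gram_mult[of v EJ] by (simp add: gram_def sum_nonneg)
  have \<omega>'_eq: "\<omega>' = L / \<sigma>2" unfolding \<omega>'_def L_def \<sigma>2_def ..
  have mean: "expectation X = \<sigma>2 * (D + \<omega>')"
    unfolding moments(3) \<omega>'_eq D_def using \<open>\<sigma>2 > 0\<close> by (simp add: field_simps)
  have variance: "variance X = 2 * \<sigma>2\<^sup>2 * (D + 2 * \<omega>')"
    unfolding moments(4) \<omega>'_eq D_def using \<open>\<sigma>2 > 0\<close> by (simp add: field_simps power2_eq_square)
  have "D + \<omega>' > 0" unfolding \<omega>'_eq D_def using \<open>\<sigma>2 > 0\<close> \<open>L \<ge> 0\<close> by (simp add: add_pos_nonneg)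
  have "expectation X > 0" unfolding mean using \<open>\<sigma>2 > 0\<close> \<open>D + \<omega>' > 0\<close> by simp
  have normF: "normF M J v = expectation (\<lambda>\<omega>. sqrt (X \<omega>))" unfolding normF_def X_def ..
  have normR: "normR M J v = sqrt (expectation X)"
    unfolding X_def by (rule normR_eq_sqrt_integral[OF integrable_gram_nth])
  have X_nonneg: "X \<omega> \<ge> 0" for \<omega> unfolding X_def inner_gram_mult by (simp add: sum_nonneg)
  note gap = relative_sqrt_expectation_gap[OF moments(1,2) X_nonneg \<open>expectation X > 0\<close>]
  have "variance X / (2 * (expectation X)\<^sup>2) = (D + 2 * \<omega>') / (D + \<omega>')\<^sup>2"
    unfolding variance unfolding mean using \<open>\<sigma>2 > 0\<close> by (simp add: power_mult_distrib)
  also have "\<dots> = (D + \<omega>') / (D + \<omega>')\<^sup>2 + \<omega>' / (D + \<omega>')\<^sup>2"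
    by (simp add: add_divide_distrib[symmetric] algebra_simps)
  also have "\<dots> = 1 / (D + \<omega>') + \<omega>' / (D + \<omega>')\<^sup>2"
    using \<open>D + \<omega>' > 0\<close> by (simp add: power2_eq_square)
  finally show ?thesis using gap unfolding normF normR by simp
qed

end
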